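(* Let $k\ge0$. If $k=0$, assume $\nabla_x f$ exists and $\|\nabla_x f(x',y')-\nabla_x f(x,y)\|\le\lambda\|x'-x\|+\mu\|y'-y\|$ for all $x,x'\in X,y,y'\in Y$ (possibly with $\lambda=\infty$). Assume $\nabla^k_{y\cdots y}f$ exists on $X\times Y$ and $\|\nabla^k_{y\cdots y}f(x',y')-\nabla^k_{y\cdots y}f(x,y)\|\le\rho_k\|y'-y\|+\sigma_k\|x'-x\|$ for all $x,x',y,y'$ (possibly with $\rho_k=\infty$), and that $\nabla^k_{y\cdots y}f(\cdot,y)$ is absolutely continuous for all $y\in Y$. Then for every $\hat y\in Y$, $x\in X$, $y\in Y$, $$\|\nabla_x f(x,y)-\nabla_x\hat f_k(x,y)\|\le\begin{cases}\min\{\mu\mathsf D,2\sigma_0\}&\text{for }k=0,\\[2pt] \dfrac{2\sigma_k\mathsf D^k}{k!}&\text{for }k\ge1.\end{cases}$$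
   Context: Let $E_x,E_y$ be finite-dimensional Euclidean spaces with Euclidean norms; for tensors $\|\cdot\|$ is the induced operator norm. Let $X\subseteq E_x$, $Y\subseteq E_y$ be convex with nonempty interior, $Y$ compact, $\mathsf D\ge\mathrm{diam}(Y)$, $f:X\times Y\to\mathbb R$. $\nabla^j_{y\cdots y}f$ denotes the tensor of $j$-th order partial derivatives in $y$. For $\hat y\in Y$, $\hat f_k(x,y)=\sum_{j=0}^k\frac1{j!}\nabla^j_{y\cdots y}f(x,\hat y)[(y-\hat y)^j]$, with $T[v^j]=T[v,\dots,v]$, and $\nabla_x\hat f_k$ its gradient in $x$. *)

theory Defs
  imports "HOL-Analysis.Analysis"
begin

text \<open>A j-linear form (tensor) on 'b is represented as a function on lists of
  vectors of length j.  Its operator norm:\<close>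
definition tensor_norm :: "nat \<Rightarrow> ('b::real_normed_vector list \<Rightarrow> real) \<Rightarrow> real" where
  "tensor_norm j T = Sup {\<bar>T vs\<bar> | vs. length vs = j \<and> (\<forall>v\<in>set vs. norm v \<le> 1)}"

definition ypartials_upto ::
  "nat \<Rightarrow> ('a \<Rightarrow> 'b::real_normed_vector \<Rightarrow> real) \<Rightarrow> (nat \<Rightarrow> 'a \<Rightarrow> 'b \<Rightarrow> 'b list \<Rightarrow> real)
    \<Rightarrow> 'a set \<Rightarrow> 'b set \<Rightarrow> bool" where
  "ypartials_upto k f D X Y \<longleftrightarrow>
     (\<forall>x\<in>X. \<forall>y\<in>Y. D 0 x y [] = f x y) \<and>
     (\<forall>j<k. \<forall>x\<in>X. \<forall>y\<in>Y. \<forall>vs. length vs = j \<longrightarrow>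
        ((\<lambda>y'. D j x y' vs) has_derivative (\<lambda>v. D (Suc j) x y (v # vs))) (at y within Y))"

definition taylor_y :: "nat \<Rightarrow> (nat \<Rightarrow> 'a \<Rightarrow> 'b::real_normed_vector \<Rightarrow> 'b list \<Rightarrow> real)
    \<Rightarrow> 'b \<Rightarrow> 'a \<Rightarrow> 'b \<Rightarrow> real" where
  "taylor_y k D yh x y = (\<Sum>j\<le>k. D j x yh (replicate j (y - yh)) / fact j)"

definition has_gradient_within :: "('a::real_inner \<Rightarrow> real) \<Rightarrow> 'a \<Rightarrow> 'a \<Rightarrow> 'a set \<Rightarrow> bool" where
  "has_gradient_within g G x S \<longleftrightarrow> (g has_derivative (\<lambda>h. G \<bullet> h)) (at x within S)"

definition abs_continuous_on :: "real set \<Rightarrow> (real \<Rightarrow> 'c::real_normed_vector) \<Rightarrow> bool" where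
  "abs_continuous_on S g \<longleftrightarrow>
    (\<forall>e>0. \<exists>d>0. \<forall>n (a::nat\<Rightarrow>real) b.
        (\<forall>i<n. a i \<le> b i \<and> a i \<in> S \<and> b i \<in> S \<and> {a i..b i} \<subseteq> S) \<and>
        (\<forall>i<n. \<forall>j<n. i \<noteq> j \<longrightarrow> b i \<le> a j \<or> b j \<le> a i) \<and>
        (\<Sum>i<n. b i - a i) < d
        \<longrightarrow> (\<Sum>i<n. norm (g (b i) - g (a i))) < e)"

text \<open>Absolute continuity of a function on a convex subset of a Euclidean space:
  absolutely continuous along every segment in X.\<close>
definition abs_continuous_segments :: "'a::real_normed_vector set \<Rightarrow> ('a \<Rightarrow> 'c::real_normed_vector) \<Rightarrow> bool" where
  "abs_continuous_segments X g \<longleftrightarrow>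
    (\<forall>a\<in>X. \<forall>b\<in>X. abs_continuous_on {0..1} (\<lambda>t. g (a + t *\<^sub>R (b - a))))"

end

(* On a convex set with nonempty interior, a gradient is bounded by every
   Lipschitz constant of the function, so it suffices to show that
   g = f(., y) - taylor_y k D yh (., y) is Lipschitz in x with constant
   2 sigma |y - yh|^k / k!.  Restricted to the segment from yh to y, g x1 - g x2 is the error
   of the order-k Taylor polynomial of a function of one variable whose k-th derivative is the
   difference of the k-th partial tensors at x1 and x2 applied to (y - yh)^k; that derivative
   has oscillation at most 2 sigma |x1 - x2| |y - yh|^k, and the integral form of the remainder
   gives the factor 1/k!.  For k = 0 the two gradients are also gf x y and gf x yh, whose
   distance is at most mu |y - yh|. *)

theory Submission
  imports Defs
begin

definition multilinear :: "nat \<Rightarrow> ('b::real_vector list \<Rightarrow> real) \<Rightarrow> bool" where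
  "multilinear j T \<longleftrightarrow>
     (\<forall>us vs. length us + length vs + 1 = j \<longrightarrow> linear (\<lambda>v. T (us @ v # vs)))"

lemma multilinear_head:
  assumes "multilinear (Suc j) T" "length vs = j"
  shows "linear (\<lambda>v. T (v # vs))"
  using assms(1)[unfolded multilinear_def, rule_format, of "[]" vs] assms(2) by simp

lemma multilinear_tail:
  assumes "multilinear (Suc j) T"
  shows "multilinear j (\<lambda>vs. T (z # vs))"
  unfolding multilinear_def
proof (intro allI impI)
  fix us vs :: "'a list"
  assume "length us + length vs + 1 = j"
  then have "length (z # us) + length vs + 1 = Suc j" by simp
  then show "linear (\<lambda>v. T (z # us @ v # vs))"
    using assms[unfolded multilinear_def, rule_format, of "z # us" vs] by simp
qed

lemma multilinear_diff:
  assumes "multilinear j T" "multilinear j S"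
  shows "multilinear j (\<lambda>vs. T vs - S vs)"
  using assms unfolding multilinear_def by (simp add: linear_compose_sub)

lemma multilinear_scaleR:
  assumes "multilinear j T" "length vs = j"
  shows "T (map ((*\<^sub>R) c) vs) = c ^ j * T vs"
  using assms
proof (induction j arbitrary: T vs)
  case (Suc j)
  then obtain v vs' where vs: "vs = v # vs'" "length vs' = j" by (cases vs) auto
  have "T (c *\<^sub>R v # map ((*\<^sub>R) c) vs') = c * T (v # map ((*\<^sub>R) c) vs')"
    using linear_scale[OF multilinear_head[OF Suc.prems(1)]] vs(2) by simp
  also have "T (v # map ((*\<^sub>R) c) vs') = c ^ j * T (v # vs')"
    using Suc.IH[OF multilinear_tail[OF Suc.prems(1)] vs(2)] .
  finally show ?case by (simp add: vs)
qed simp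

lemma multilinear_bounded_on_unit_vectors:
  fixes T :: "'b::euclidean_space list \<Rightarrow> real"
  assumes "multilinear j T"
  obtains C where "\<And>vs. length vs = j \<Longrightarrow> \<forall>v\<in>set vs. norm v \<le> 1 \<Longrightarrow> \<bar>T vs\<bar> \<le> C"
  using assms
proof (induction j arbitrary: T thesis)
  case 0
  show ?case by (rule "0.prems"(1)[of "\<bar>T []\<bar>"]) auto
next
  case (Suc j)
  have "\<forall>b\<in>Basis. \<exists>C. \<forall>vs. length vs = j \<and> (\<forall>v\<in>set vs. norm v \<le> 1) \<longrightarrow> \<bar>T (b # vs)\<bar> \<le> C"
    using Suc.IH[OF _ multilinear_tail[OF Suc.prems(2)]] by metis
  then obtain C where C: "\<And>b vs. b \<in> Basis \<Longrightarrow> length vs = j \<Longrightarrow> \<forall>v\<in>set vs. norm v \<le> 1 \<Longrightarrow>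
      \<bar>T (b # vs)\<bar> \<le> C b"
    by metis
  show ?case
  proof (rule Suc.prems(1))
    fix vs :: "'b list"
    assume "length vs = Suc j" and unit: "\<forall>v\<in>set vs. norm v \<le> 1"
    then obtain v vs' where vs: "vs = v # vs'" "length vs' = j" by (cases vs) auto
    have lin: "linear (\<lambda>v. T (v # vs'))" by (rule multilinear_head[OF Suc.prems(2) vs(2)])
    have "T vs = T ((\<Sum>b\<in>Basis. (v \<bullet> b) *\<^sub>R b) # vs')"
      by (simp add: vs euclidean_representation)
    also have "\<dots> = (\<Sum>b\<in>Basis. T (((v \<bullet> b) *\<^sub>R b) # vs'))"
      by (rule linear_sum[OF lin])
    also have "\<dots> = (\<Sum>b\<in>Basis. (v \<bullet> b) * T (b # vs'))"
      using linear_scale[OF lin] by simp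
    finally have "\<bar>T vs\<bar> \<le> (\<Sum>b\<in>Basis. \<bar>v \<bullet> b\<bar> * \<bar>T (b # vs')\<bar>)"
      using sum_abs[of "\<lambda>b. (v \<bullet> b) * T (b # vs')" Basis] by (simp add: abs_mult)
    also have "\<dots> \<le> (\<Sum>b\<in>Basis. 1 * C b)"
    proof (intro sum_mono mult_mono)
      fix b :: 'b assume b: "b \<in> Basis"
      show "\<bar>v \<bullet> b\<bar> \<le> 1" using Basis_le_norm[OF b, of v] unit vs by auto
      show "\<bar>T (b # vs')\<bar> \<le> C b" using C[OF b vs(2)] unit vs by auto
    qed auto
    finally show "\<bar>T vs\<bar> \<le> (\<Sum>b\<in>Basis. C b)" by simp
  qed
qed

lemma abs_le_tensor_norm:
  fixes T :: "'b::euclidean_space list \<Rightarrow> real"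
  assumes "multilinear k T" "length vs = k" "\<forall>v\<in>set vs. norm v \<le> 1"
  shows "\<bar>T vs\<bar> \<le> tensor_norm k T"
proof -
  obtain C where "\<And>vs. length vs = k \<Longrightarrow> \<forall>v\<in>set vs. norm v \<le> 1 \<Longrightarrow> \<bar>T vs\<bar> \<le> C"
    using multilinear_bounded_on_unit_vectors[OF assms(1)] by blast
  then have "bdd_above {\<bar>T vs\<bar> | vs. length vs = k \<and> (\<forall>v\<in>set vs. norm v \<le> 1)}"
    by (auto intro!: bdd_aboveI[of _ C])
  then show ?thesis
    unfolding tensor_norm_def by (rule cSup_upper[rotated]) (use assms(2,3) in blast)
qed

lemma tensor_norm_nonneg:
  fixes T :: "'b::euclidean_space list \<Rightarrow> real"
  assumes "multilinear k T"
  shows "0 \<le> tensor_norm k T"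
  using abs_le_tensor_norm[OF assms, of "replicate k 0"] by auto

lemma abs_replicate_le_tensor_norm:
  fixes T :: "'b::euclidean_space list \<Rightarrow> real"
  assumes "multilinear k T"
  shows "\<bar>T (replicate k u)\<bar> \<le> tensor_norm k T * norm u ^ k"
proof -
  define w where "w = u /\<^sub>R norm u"
  have "u = norm u *\<^sub>R w" by (cases "u = 0") (simp_all add: w_def)
  then have "\<bar>T (replicate k u)\<bar> = norm u ^ k * \<bar>T (replicate k w)\<bar>"
    by (metis multilinear_scaleR[OF assms] length_replicate map_replicate abs_mult
        power_abs abs_norm_cancel)
  also have "\<dots> \<le> norm u ^ k * tensor_norm k T"
  proof (rule mult_left_mono)
    have "norm w \<le> 1" by (cases "u = 0") (simp_all add: w_def)
    then show "\<bar>T (replicate k w)\<bar> \<le> tensor_norm k T"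
      by (intro abs_le_tensor_norm[OF assms]) auto
  qed simp
  finally show ?thesis by (simp only: mult.commute)
qed

text \<open>The point \<open>x\<close> may lie on the boundary of \<open>S\<close>, so instead of moving from \<open>x\<close>
  in direction \<open>a - b\<close> we compare the segments from \<open>x\<close> towards \<open>a\<close> and towards \<open>b\<close>.\<close>

lemma lipschitz_has_derivative_bound_on_differences:
  fixes g :: "'a::real_normed_vector \<Rightarrow> real"
  assumes "convex S" "x \<in> S" "a \<in> S" "b \<in> S"
    and deriv: "(g has_derivative L) (at x within S)"
    and lip: "\<And>a b. a \<in> S \<Longrightarrow> b \<in> S \<Longrightarrow> \<bar>g a - g b\<bar> \<le> C * norm (a - b)"
  shows "\<bar>L (a - b)\<bar> \<le> C * norm (a - b)"
proof -
  define p where "p z t = x + t *\<^sub>R (z - x)" for z and t :: real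
  have p_in_S: "p z t \<in> S" if "z \<in> S" "t \<in> {0..1}" for z t
  proof -
    have "p z t = (1 - t) *\<^sub>R x + t *\<^sub>R z" by (simp add: p_def algebra_simps)
    then show ?thesis using that assms(1,2) by (auto intro: convexD)
  qed
  have along_segment: "((\<lambda>t. g (p z t)) has_derivative (\<lambda>t. L (t *\<^sub>R (z - x)))) (at 0 within {0..1})"
    if "z \<in> S" for z
  proof -
    have "(p z has_derivative (\<lambda>t. t *\<^sub>R (z - x))) (at 0 within {0..1})"
      unfolding p_def by (auto intro!: derivative_eq_intros)
    moreover have "(g has_derivative L) (at (p z 0) within p z ` {0..1})"
      using has_derivative_subset[OF deriv] p_in_S[OF that] by (simp add: p_def image_subset_iff)
    ultimately have "((g \<circ> p z) has_derivative (L \<circ> (\<lambda>t. t *\<^sub>R (z - x)))) (at 0 within {0..1})"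
      by (rule diff_chain_within)
    then show ?thesis by (simp add: o_def)
  qed
  have lin: "linear L" by (rule has_derivative_linear[OF deriv])
  have "L (a - b) = L (a - x) - L (b - x)"
    by (simp add: linear_diff[OF lin, symmetric])
  then have "(\<lambda>t. L (t *\<^sub>R (a - x)) - L (t *\<^sub>R (b - x))) = (*) (L (a - b))"
    by (simp add: fun_eq_iff linear_scale[OF lin] right_diff_distrib mult.commute)
  then have "((\<lambda>t. g (p a t) - g (p b t)) has_field_derivative L (a - b)) (at 0 within {0..1})"
    using has_derivative_diff[OF along_segment[OF assms(3)] along_segment[OF assms(4)]]
    by (simp add: has_field_derivative_def)
  then have "((\<lambda>t. (g (p a t) - g (p b t)) / t) \<longlongrightarrow> L (a - b)) (at 0 within {0..1})"
    by (simp add: has_field_derivative_iff p_def)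
  then have "((\<lambda>t. \<bar>(g (p a t) - g (p b t)) / t\<bar>) \<longlongrightarrow> \<bar>L (a - b)\<bar>) (at 0 within {0..1})"
    by (rule tendsto_rabs)
  moreover have "\<bar>(g (p a t) - g (p b t)) / t\<bar> \<le> C * norm (a - b)" if "t \<in> {0<..1}" for t
  proof -
    have "\<bar>g (p a t) - g (p b t)\<bar> \<le> C * norm (p a t - p b t)"
      using lip p_in_S assms(3,4) that by simp
    also have "norm (p a t - p b t) = t * norm (a - b)"
      using that by (simp add: p_def scaleR_diff_right[symmetric])
    finally show ?thesis using that by (simp add: pos_divide_le_eq mult_ac)
  qed
  then have "eventually (\<lambda>t. \<bar>(g (p a t) - g (p b t)) / t\<bar> \<le> C * norm (a - b)) (at 0 within {0..1})"
    by (auto simp: eventually_at_filter)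
  ultimately show ?thesis
    by (rule tendsto_upperbound) (simp add: at_within_Icc_at_right)
qed

lemma lipschitz_has_derivative_bound:
  fixes g :: "'a::real_normed_vector \<Rightarrow> real"
  assumes "convex S" "interior S \<noteq> {}" "x \<in> S"
    and deriv: "(g has_derivative L) (at x within S)"
    and lip: "\<And>a b. a \<in> S \<Longrightarrow> b \<in> S \<Longrightarrow> \<bar>g a - g b\<bar> \<le> C * norm (a - b)"
  shows "\<bar>L v\<bar> \<le> C * norm v"
proof (cases "v = 0")
  case True
  then show ?thesis using linear_0[OF has_derivative_linear[OF deriv]] by simp
next
  case False
  obtain c r where "r > 0" "ball c r \<subseteq> S"
    using assms(2) by (auto simp: mem_interior)
  moreover define e where "e = r / (2 * norm v)"
  ultimately have e: "e > 0" and in_S: "c + e *\<^sub>R v \<in> S" "c \<in> S"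
    using False by (auto simp: dist_norm)
  have "\<bar>L ((c + e *\<^sub>R v) - c)\<bar> \<le> C * norm ((c + e *\<^sub>R v) - c)"
    by (rule lipschitz_has_derivative_bound_on_differences[OF assms(1,3) in_S deriv lip])
  then have "e * \<bar>L v\<bar> \<le> e * (C * norm v)"
    using e linear_scale[OF has_derivative_linear[OF deriv]] by (simp add: abs_mult mult_ac)
  then show ?thesis using e by simp
qed

lemma has_derivative_within_convex_unique:
  fixes f :: "'a::real_normed_vector \<Rightarrow> real"
  assumes "convex S" "interior S \<noteq> {}" "x \<in> S"
    and "(f has_derivative L1) (at x within S)" "(f has_derivative L2) (at x within S)"
  shows "L1 = L2"
proof
  fix v
  have "((\<lambda>y. f y - f y) has_derivative (\<lambda>v. L1 v - L2 v)) (at x within S)"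
    by (rule has_derivative_diff[OF assms(4,5)])
  from lipschitz_has_derivative_bound[OF assms(1-3) this, of 0 v] show "L1 v = L2 v" by simp
qed

lemma lipschitz_constant_nonneg:
  fixes S :: "'a::{real_normed_vector, perfect_space} set"
  assumes "interior S \<noteq> {}" and "\<And>a b. a \<in> S \<Longrightarrow> b \<in> S \<Longrightarrow> 0 \<le> C * norm (a - b)"
  shows "0 \<le> C"
proof -
  obtain c where c: "c \<in> interior S" using assms(1) by blast
  then have "S \<noteq> {c}" by auto
  then obtain b where "b \<in> S" "b \<noteq> c" using c interior_subset by blast
  with assms(2)[of b c] c interior_subset show ?thesis by (auto simp: zero_le_mult_iff)
qed

lemma has_gradient_within_norm_le:
  fixes g :: "'a::{real_inner, perfect_space} \<Rightarrow> real"
  assumes "convex S" "interior S \<noteq> {}" "x \<in> S" "has_gradient_within g G x S"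
    and lip: "\<And>a b. a \<in> S \<Longrightarrow> b \<in> S \<Longrightarrow> \<bar>g a - g b\<bar> \<le> C * norm (a - b)"
  shows "norm G \<le> C"
proof (cases "G = 0")
  case True
  have "0 \<le> C" by (rule lipschitz_constant_nonneg[OF assms(2)]) (meson abs_ge_zero order_trans lip)
  then show ?thesis using True by simp
next
  case False
  have "norm G * norm G \<le> C * norm G"
    using lipschitz_has_derivative_bound[OF assms(1-3) assms(4)[unfolded has_gradient_within_def] lip, of G]
    by (simp add: dot_square_norm power2_eq_square)
  then show ?thesis using False by simp
qed

lemma has_gradient_within_convex_unique:
  fixes g :: "'a::real_inner \<Rightarrow> real"
  assumes "convex S" "interior S \<noteq> {}" "x \<in> S"
    and "has_gradient_within g G1 x S" "has_gradient_within g G2 x S"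
  shows "G1 = G2"
proof -
  have "(\<lambda>h. G1 \<bullet> h) = (\<lambda>h. G2 \<bullet> h)"
    using has_derivative_within_convex_unique assms unfolding has_gradient_within_def by blast
  then have "G1 \<bullet> (G1 - G2) = G2 \<bullet> (G1 - G2)" by metis
  then have "(G1 - G2) \<bullet> (G1 - G2) = 0" by (simp add: inner_diff_left)
  then show ?thesis by simp
qed

lemma linear_derivative_of_linear_family:
  fixes F F' :: "'a::real_normed_vector \<Rightarrow> 'b::real_vector \<Rightarrow> real"
  assumes "convex S" "interior S \<noteq> {}" "y \<in> S"
    and lin: "\<And>y'. y' \<in> S \<Longrightarrow> linear (F y')"
    and deriv: "\<And>v. ((\<lambda>y'. F y' v) has_derivative (\<lambda>z. F' z v)) (at y within S)"
  shows "linear (F' z)"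
proof (rule linearI)
  have unique: "L1 = L2" if "((\<lambda>y'. F y' v) has_derivative L1) (at y within S)"
    "((\<lambda>y'. F y' v) has_derivative L2) (at y within S)" for v L1 L2
    by (rule has_derivative_within_convex_unique[OF assms(1-3) that])
  fix v w :: 'b and c :: real
  have "((\<lambda>y'. F y' (v + w)) has_derivative (\<lambda>z. F' z v + F' z w)) (at y within S)"
    using has_derivative_add[OF deriv deriv]
    by (rule has_derivative_transform[OF assms(3), rotated]) (simp add: lin linear_add)
  from unique[OF deriv this] show "F' z (v + w) = F' z v + F' z w" by metis
  have "((\<lambda>y'. F y' (c *\<^sub>R v)) has_derivative (\<lambda>z. c *\<^sub>R F' z v)) (at y within S)"
    using has_derivative_scaleR_right[OF deriv]
    by (rule has_derivative_transform[OF assms(3), rotated]) (simp add: lin linear_scale)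
  from unique[OF deriv this] show "F' z (c *\<^sub>R v) = c *\<^sub>R F' z v" by metis
qed

lemma monomial_has_vector_derivative:
  assumes "m < k"
  shows "((\<lambda>t. (t - a) ^ (k - m) / fact (k - m)) has_vector_derivative
           (t - a) ^ (k - Suc m) / fact (k - Suc m)) (at t within S)"
proof -
  obtain n where n: "k - m = Suc n" "k - Suc m = n" using assms by (metis Suc_diff_Suc)
  have "((\<lambda>t. (t - a) ^ Suc n / fact (Suc n)) has_real_derivative (t - a) ^ n / fact n)
          (at t within S)"
    by (auto intro!: derivative_eq_intros simp del: power_Suc)
  then show ?thesis
    unfolding n has_real_derivative_iff_has_vector_derivative .
qed

lemma has_integral_taylor_weight:
  fixes a b :: real
  assumes "0 < k" "a \<le> b"
  shows "((\<lambda>x. (b - x) ^ (k - 1) / fact (k - 1)) has_integral (b - a) ^ k / fact k) {a..b}"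
proof -
  define P where "P m t = (t - a) ^ (k - m) / fact (k - m)" for m t
  have "((\<lambda>x. ((b - x) ^ (k - 1) / fact (k - 1)) *\<^sub>R P k x) has_integral
      P 0 b - (\<Sum>i<k. ((b - a) ^ i / fact i) *\<^sub>R P i a)) {a..b}"
    unfolding P_def using assms by (intro Taylor_has_integral monomial_has_vector_derivative) auto
  moreover have "(\<Sum>i<k. ((b - a) ^ i / fact i) *\<^sub>R P i a) = 0"
    by (intro sum.neutral) (simp add: P_def)
  ultimately show ?thesis by (simp add: P_def)
qed

text \<open>Subtracting \<open>Df k a\<close> turns the integral remainder of order \<open>k - 1\<close> into the
  error of the Taylor polynomial of order \<open>k\<close>, because the weight integrates to
  \<open>(b - a) ^ k / fact k\<close>.\<close>

lemma taylor_remainder_bound: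
  fixes Df :: "nat \<Rightarrow> real \<Rightarrow> real"
  assumes "a \<le> b"
    and deriv: "\<And>m t. m < k \<Longrightarrow> a \<le> t \<Longrightarrow> t \<le> b \<Longrightarrow>
                  (Df m has_vector_derivative Df (Suc m) t) (at t within {a..b})"
    and bound: "\<And>t. a \<le> t \<Longrightarrow> t \<le> b \<Longrightarrow> \<bar>Df k t - Df k a\<bar> \<le> B"
  shows "\<bar>Df 0 b - (\<Sum>j\<le>k. (b - a) ^ j / fact j * Df j a)\<bar> \<le> B * (b - a) ^ k / fact k"
proof (cases "k = 0")
  case True
  then show ?thesis using bound[of b] assms(1) by simp
next
  case False
  define w where "w x = (b - x) ^ (k - 1) / fact (k - 1)" for x
  have weight: "(w has_integral (b - a) ^ k / fact k) {a..b}"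
    unfolding w_def using False assms(1) by (intro has_integral_taylor_weight) auto
  have "((\<lambda>x. w x *\<^sub>R Df k x) has_integral
      Df 0 b - (\<Sum>i<k. ((b - a) ^ i / fact i) *\<^sub>R Df i a)) {a..b}"
    unfolding w_def using False assms(1) by (intro Taylor_has_integral deriv) auto
  from has_integral_diff[OF this has_integral_mult_left[OF weight]]
  have "((\<lambda>x. w x * (Df k x - Df k a)) has_integral
      Df 0 b - (\<Sum>i<k. (b - a) ^ i / fact i * Df i a) - (b - a) ^ k / fact k * Df k a) {a..b}"
    by (simp add: right_diff_distrib)
  then have remainder: "((\<lambda>x. w x * (Df k x - Df k a)) has_integral
      Df 0 b - (\<Sum>j\<le>k. (b - a) ^ j / fact j * Df j a)) {a..b}"
    by (simp add: lessThan_Suc_atMost[symmetric] algebra_simps)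
  have bound_integral: "((\<lambda>x. w x * B) has_integral B * (b - a) ^ k / fact k) {a..b}"
    using has_integral_mult_left[OF weight, of B] by (simp add: mult.commute)
  have "\<bar>w x * (Df k x - Df k a)\<bar> \<le> w x * B" if "x \<in> {a..b}" for x
  proof -
    have "0 \<le> w x" using that by (simp add: w_def)
    then show ?thesis using bound that by (simp add: abs_mult mult_left_mono)
  qed
  then have "Df 0 b - (\<Sum>j\<le>k. (b - a) ^ j / fact j * Df j a) \<le> B * (b - a) ^ k / fact k"
    and "- (Df 0 b - (\<Sum>j\<le>k. (b - a) ^ j / fact j * Df j a)) \<le> B * (b - a) ^ k / fact k"
    by (intro has_integral_le[OF remainder bound_integral]
        has_integral_le[OF has_integral_neg[OF remainder] bound_integral]; force)+
  then show ?thesis by linarith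
qed

lemma ypartials_upto_multilinear:
  fixes D :: "nat \<Rightarrow> 'a \<Rightarrow> 'b::real_normed_vector \<Rightarrow> 'b list \<Rightarrow> real"
  assumes Y: "convex Y" "interior Y \<noteq> {}" and partials: "ypartials_upto k f D X Y"
    and "j \<le> k" "x \<in> X" "y \<in> Y"
  shows "multilinear j (D j x y)"
  using assms(4-)
proof (induction j arbitrary: y)
  case 0
  then show ?case by (simp add: multilinear_def)
next
  case (Suc j)
  have deriv: "((\<lambda>y'. D j x y' vs) has_derivative (\<lambda>v. D (Suc j) x y (v # vs))) (at y within Y)"
    if "length vs = j" for vs
    using partials Suc.prems that unfolding ypartials_upto_def by auto
  show ?case
    unfolding multilinear_def
  proof (intro allI impI)
    fix us vs :: "'b list"
    assume len: "length us + length vs + 1 = Suc j"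
    show "linear (\<lambda>v. D (Suc j) x y (us @ v # vs))"
    proof (cases us)
      case Nil
      then show ?thesis using len deriv has_derivative_linear by fastforce
    next
      case (Cons z us')
      have "linear (\<lambda>v. D j x y' (us' @ v # vs))" if "y' \<in> Y" for y'
        using Suc.IH[of y'] Suc.prems that len Cons unfolding multilinear_def by simp
      with deriv show ?thesis
        using linear_derivative_of_linear_family[OF Y \<open>y \<in> Y\<close>,
            of "\<lambda>y' v. D j x y' (us' @ v # vs)" "\<lambda>z v. D (Suc j) x y (z # us' @ v # vs)"]
          len Cons by simp
    qed
  qed
qed

lemma ypartials_upto_segment_has_vector_derivative:
  fixes D :: "nat \<Rightarrow> 'a \<Rightarrow> 'b::real_normed_vector \<Rightarrow> 'b list \<Rightarrow> real"
  assumes "convex Y" "ypartials_upto k f D X Y"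
    and "m < k" "x \<in> X" "yh \<in> Y" "y \<in> Y" "t \<in> {0..1}"
  shows "((\<lambda>t. D m x (yh + t *\<^sub>R (y - yh)) (replicate m (y - yh))) has_vector_derivative
           D (Suc m) x (yh + t *\<^sub>R (y - yh)) (replicate (Suc m) (y - yh))) (at t within {0..1})"
proof -
  let ?u = "y - yh"
  have on_segment: "yh + s *\<^sub>R ?u \<in> Y" if "s \<in> {0..1}" for s
  proof -
    have "yh + s *\<^sub>R ?u = (1 - s) *\<^sub>R yh + s *\<^sub>R y" by (simp add: algebra_simps)
    then show ?thesis using that assms(1,5,6) by (auto intro: convexD)
  qed
  have deriv: "((\<lambda>y'. D m x y' (replicate m ?u)) has_derivative
      (\<lambda>v. D (Suc m) x y0 (v # replicate m ?u))) (at y0 within Y)" if "y0 \<in> Y" for y0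
    using assms(2-4) that unfolding ypartials_upto_def by auto
  have chain: "((\<lambda>s. D m x (yh + s *\<^sub>R ?u) (replicate m ?u)) has_derivative
      (\<lambda>s. D (Suc m) x (yh + t *\<^sub>R ?u) (s *\<^sub>R ?u # replicate m ?u))) (at t within {0..1})"
    by (rule has_derivative_in_compose2[OF deriv _ assms(7)])
      (use on_segment in \<open>auto intro!: derivative_eq_intros\<close>)
  have "linear (\<lambda>v. D (Suc m) x (yh + t *\<^sub>R ?u) (v # replicate m ?u))"
    using deriv[OF on_segment[OF assms(7)]] by (rule has_derivative_linear)
  then have "(\<lambda>s. D (Suc m) x (yh + t *\<^sub>R ?u) (s *\<^sub>R ?u # replicate m ?u)) =
      (\<lambda>s. s *\<^sub>R D (Suc m) x (yh + t *\<^sub>R ?u) (?u # replicate m ?u))"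
    by (intro ext) (rule linear_scale)
  with chain show ?thesis
    by (simp only: has_vector_derivative_def replicate_Suc)
qed

lemma taylor_y_error_lipschitz:
  fixes f :: "'a::real_normed_vector \<Rightarrow> 'b::euclidean_space \<Rightarrow> real"
    and D :: "nat \<Rightarrow> 'a \<Rightarrow> 'b \<Rightarrow> 'b list \<Rightarrow> real"
  assumes Y: "convex Y" "interior Y \<noteq> {}" and partials: "ypartials_upto k f D X Y"
    and sigma: "\<And>x x' y. x \<in> X \<Longrightarrow> x' \<in> X \<Longrightarrow> y \<in> Y \<Longrightarrow>
                  tensor_norm k (\<lambda>vs. D k x' y vs - D k x y vs) \<le> \<sigma> * norm (x' - x)"
    and x: "x1 \<in> X" "x2 \<in> X" and y: "yh \<in> Y" "y \<in> Y"
  shows "\<bar>(f x1 y - taylor_y k D yh x1 y) - (f x2 y - taylor_y k D yh x2 y)\<bar>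
           \<le> 2 * \<sigma> * norm (y - yh) ^ k / fact k * norm (x1 - x2)"
proof -
  define u where "u = y - yh"
  define q where "q m t = D m x1 (yh + t *\<^sub>R u) (replicate m u) - D m x2 (yh + t *\<^sub>R u) (replicate m u)"
    for m t
  define M where "M = \<sigma> * norm (x1 - x2) * norm u ^ k"
  have "(q m has_vector_derivative q (Suc m) t) (at t within {0..1})"
    if "m < k" "0 \<le> t" "t \<le> 1" for m t
    unfolding q_def u_def
    using that x y by (intro has_vector_derivative_diff ypartials_upto_segment_has_vector_derivative[OF Y(1) partials]) auto
  moreover have q_bound: "\<bar>q k t\<bar> \<le> M" if "0 \<le> t" "t \<le> 1" for t
  proof -
    have "yh + t *\<^sub>R u \<in> Y"
      using convexD[OF Y(1) y, of "1 - t" t] that by (simp add: u_def algebra_simps)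
    then have "multilinear k (\<lambda>vs. D k x1 (yh + t *\<^sub>R u) vs - D k x2 (yh + t *\<^sub>R u) vs)"
      and "tensor_norm k (\<lambda>vs. D k x1 (yh + t *\<^sub>R u) vs - D k x2 (yh + t *\<^sub>R u) vs) \<le> \<sigma> * norm (x1 - x2)"
      using x by (auto intro!: multilinear_diff ypartials_upto_multilinear[OF Y partials] sigma)
    from abs_replicate_le_tensor_norm[OF this(1)] mult_right_mono[OF this(2)]
    show ?thesis unfolding q_def M_def by (meson norm_ge_zero order_trans zero_le_power)
  qed
  then have "\<bar>q k t - q k 0\<bar> \<le> 2 * M" if "0 \<le> t" "t \<le> 1" for t
    using q_bound[of t] q_bound[of 0] that abs_triangle_ineq4[of "q k t" "q k 0"] by linarith
  ultimately have "\<bar>q 0 1 - (\<Sum>j\<le>k. (1 - 0) ^ j / fact j * q j 0)\<bar> \<le> 2 * M * (1 - 0) ^ k / fact k"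
    by (intro taylor_remainder_bound) auto
  moreover have "f x y = D 0 x y []" if "x \<in> X" for x
    using partials that y unfolding ypartials_upto_def by auto
  ultimately show ?thesis
    using x by (simp add: taylor_y_def q_def M_def u_def sum_subtractf diff_divide_distrib mult_ac)
qed

lemma taylor_y_gradient_error_bound:
  fixes f :: "'a::euclidean_space \<Rightarrow> 'b::euclidean_space \<Rightarrow> real"
    and D :: "nat \<Rightarrow> 'a \<Rightarrow> 'b \<Rightarrow> 'b list \<Rightarrow> real"
  assumes X: "convex X" "interior X \<noteq> {}" and Y: "convex Y" "interior Y \<noteq> {}"
    and partials: "ypartials_upto k f D X Y"
    and sigma: "\<And>x x' y. x \<in> X \<Longrightarrow> x' \<in> X \<Longrightarrow> y \<in> Y \<Longrightarrow>
                  tensor_norm k (\<lambda>vs. D k x' y vs - D k x y vs) \<le> \<sigma> * norm (x' - x)"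
    and "x \<in> X" "yh \<in> Y" "y \<in> Y"
    and "has_gradient_within (\<lambda>x'. f x' y) G1 x X"
    and "has_gradient_within (\<lambda>x'. taylor_y k D yh x' y) G2 x X"
  shows "norm (G1 - G2) \<le> 2 * \<sigma> * norm (y - yh) ^ k / fact k"
proof (rule has_gradient_within_norm_le[OF X \<open>x \<in> X\<close>])
  have "(\<lambda>h. G1 \<bullet> h - G2 \<bullet> h) = (\<bullet>) (G1 - G2)" by (simp add: fun_eq_iff inner_diff_left)
  then show "has_gradient_within (\<lambda>x'. f x' y - taylor_y k D yh x' y) (G1 - G2) x X"
    using has_derivative_diff[OF assms(10,11)[unfolded has_gradient_within_def]]
    unfolding has_gradient_within_def by simp
  show "\<bar>(f a y - taylor_y k D yh a y) - (f b y - taylor_y k D yh b y)\<bar>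
          \<le> 2 * \<sigma> * norm (y - yh) ^ k / fact k * norm (a - b)" if "a \<in> X" "b \<in> X" for a b
    by (rule taylor_y_error_lipschitz[OF Y partials sigma that assms(8,9)])
qed

lemma taylor_y_0_gradient_error_bound:
  fixes f :: "'a::real_inner \<Rightarrow> 'b::real_normed_vector \<Rightarrow> real"
  assumes X: "convex X" "interior X \<noteq> {}" and partials: "ypartials_upto 0 f D X Y"
    and grad: "\<And>x y. x \<in> X \<Longrightarrow> y \<in> Y \<Longrightarrow> has_gradient_within (\<lambda>x'. f x' y) (gf x y) x X"
    and mu: "\<And>x y y'. x \<in> X \<Longrightarrow> y \<in> Y \<Longrightarrow> y' \<in> Y \<Longrightarrow>
               norm (gf x y' - gf x y) \<le> \<mu> * norm (y' - y)"
    and x: "x \<in> X" and y: "yh \<in> Y" "y \<in> Y"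
    and G1: "has_gradient_within (\<lambda>x'. f x' y) G1 x X"
    and G2: "has_gradient_within (\<lambda>x'. taylor_y 0 D yh x' y) G2 x X"
  shows "norm (G1 - G2) \<le> \<mu> * norm (y - yh)"
proof -
  have "f x' yh = taylor_y 0 D yh x' y" if "x' \<in> X" for x'
    using partials that y unfolding ypartials_upto_def taylor_y_def by simp
  then have "has_gradient_within (\<lambda>x'. f x' yh) G2 x X"
    unfolding has_gradient_within_def
    by (rule has_derivative_transform[OF x _ G2[unfolded has_gradient_within_def]])
  then have "G2 = gf x yh"
    by (rule has_gradient_within_convex_unique[OF X x _ grad[OF x y(1)]])
  moreover have "G1 = gf x y"
    by (rule has_gradient_within_convex_unique[OF X x G1 grad[OF x y(2)]])
  ultimately show ?thesis using mu[OF x y] by (simp only:)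
qed

lemma tensor_lipschitz_constant_nonneg:
  fixes D :: "nat \<Rightarrow> 'a::{real_normed_vector, perfect_space} \<Rightarrow> 'b::euclidean_space \<Rightarrow> 'b list \<Rightarrow> real"
  assumes "interior X \<noteq> {}" and Y: "convex Y" "interior Y \<noteq> {}"
    and partials: "ypartials_upto k f D X Y" and "y \<in> Y"
    and sigma: "\<And>x x'. x \<in> X \<Longrightarrow> x' \<in> X \<Longrightarrow>
                  tensor_norm k (\<lambda>vs. D k x' y vs - D k x y vs) \<le> \<sigma> * norm (x' - x)"
  shows "0 \<le> \<sigma>"
proof (rule lipschitz_constant_nonneg[OF assms(1)])
  fix a b assume "a \<in> X" "b \<in> X"
  then have "0 \<le> tensor_norm k (\<lambda>vs. D k a y vs - D k b y vs)"
    using \<open>y \<in> Y\<close> by (intro tensor_norm_nonneg multilinear_diff ypartials_upto_multilinear[OF Y partials]) auto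
  also have "\<dots> \<le> \<sigma> * norm (a - b)" by (rule sigma) fact+
  finally show "0 \<le> \<sigma> * norm (a - b)" .
qed

lemma norm_diff_le_diameter:
  assumes "bounded S" "diameter S \<le> d" "a \<in> S" "b \<in> S"
  shows "norm (a - b) \<le> d"
  using diameter_bounded_bound[OF assms(1,3,4)] assms(2) by (simp add: dist_norm)

theorem lemma2:
  fixes f :: "'a::euclidean_space \<Rightarrow> 'b::euclidean_space \<Rightarrow> real"
    and X :: "'a set" and Y :: "'b set"
    and D :: "nat \<Rightarrow> 'a \<Rightarrow> 'b \<Rightarrow> 'b list \<Rightarrow> real"
    and gf :: "'a \<Rightarrow> 'b \<Rightarrow> 'a"
    and k :: nat and DD \<mu> \<sigma> :: real and lam rho :: ereal
  assumes "convex X" "interior X \<noteq> {}" "convex Y" "interior Y \<noteq> {}" "compact Y"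
    and "diameter Y \<le> DD"
    and "k = 0 \<Longrightarrow> (\<forall>x\<in>X. \<forall>y\<in>Y. has_gradient_within (\<lambda>x'. f x' y) (gf x y) x X) \<and>
           (\<forall>x\<in>X. \<forall>x'\<in>X. \<forall>y\<in>Y. \<forall>y'\<in>Y.
              ereal (norm (gf x' y' - gf x y)) \<le> lam * ereal (norm (x' - x)) + ereal (\<mu> * norm (y' - y)))"
    and "ypartials_upto k f D X Y"
    and "\<forall>x\<in>X. \<forall>x'\<in>X. \<forall>y\<in>Y. \<forall>y'\<in>Y.
           ereal (tensor_norm k (\<lambda>vs. D k x' y' vs - D k x y vs))
             \<le> rho * ereal (norm (y' - y)) + ereal (\<sigma> * norm (x' - x))"
    and "\<forall>y\<in>Y. \<forall>vs. length vs = k \<longrightarrow> abs_continuous_segments X (\<lambda>x. D k x y vs)"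
  shows "\<forall>yh\<in>Y. \<forall>x\<in>X. \<forall>y\<in>Y. \<forall>G1 G2.
           has_gradient_within (\<lambda>x'. f x' y) G1 x X \<and>
           has_gradient_within (\<lambda>x'. taylor_y k D yh x' y) G2 x X \<longrightarrow>
           norm (G1 - G2) \<le> (if k = 0 then min (\<mu> * DD) (2 * \<sigma>) else 2 * \<sigma> * DD ^ k / fact k)"
proof (intro ballI allI impI)
  note X = assms(1,2) and Y = assms(3,4) and partials = assms(8)
  fix yh x y G1 G2
  assume x: "x \<in> X" and y: "yh \<in> Y" "y \<in> Y"
    and G: "has_gradient_within (\<lambda>x'. f x' y) G1 x X \<and>
            has_gradient_within (\<lambda>x'. taylor_y k D yh x' y) G2 x X"
  have sigma: "tensor_norm k (\<lambda>vs. D k x' y vs - D k x y vs) \<le> \<sigma> * norm (x' - x)"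
    if "x \<in> X" "x' \<in> X" "y \<in> Y" for x x' y
    using assms(9)[rule_format, OF that(1,2,3,3)] by (simp add: zero_ereal_def[symmetric])
  have dist: "norm (y - yh) \<le> DD"
    by (rule norm_diff_le_diameter[OF compact_imp_bounded[OF assms(5)] assms(6) y(2,1)])
  have "0 \<le> \<sigma>" by (rule tensor_lipschitz_constant_nonneg[OF X(2) Y partials y(1) sigma[OF _ _ y(1)]])
  with dist have "2 * \<sigma> * norm (y - yh) ^ k / fact k \<le> 2 * \<sigma> * DD ^ k / fact k"
    by (intro divide_right_mono mult_left_mono power_mono) auto
  moreover have "norm (G1 - G2) \<le> 2 * \<sigma> * norm (y - yh) ^ k / fact k"
    using taylor_y_gradient_error_bound[OF X Y partials sigma x y] G by simp
  moreover have "norm (G1 - G2) \<le> \<mu> * DD" if "k = 0"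
  proof -
    have grad: "has_gradient_within (\<lambda>x'. f x' y) (gf x y) x X" if "x \<in> X" "y \<in> Y" for x y
      using assms(7)[OF \<open>k = 0\<close>] that by blast
    have mu: "norm (gf x y' - gf x y) \<le> \<mu> * norm (y' - y)" if "x \<in> X" "y \<in> Y" "y' \<in> Y" for x y y'
      using assms(7)[OF \<open>k = 0\<close>, THEN conjunct2, rule_format, OF that(1,1,2,3)]
      by (simp add: zero_ereal_def[symmetric])
    have "0 \<le> \<mu>"
      using lipschitz_constant_nonneg[OF Y(2)] order_trans[OF norm_ge_zero mu[OF x]] by blast
    with dist have "\<mu> * norm (y - yh) \<le> \<mu> * DD" by (rule mult_left_mono)
    moreover have "norm (G1 - G2) \<le> \<mu> * norm (y - yh)"
      using taylor_y_0_gradient_error_bound[OF X _ grad mu x y] partials G \<open>k = 0\<close> by simp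
    ultimately show ?thesis by linarith
  qed
  ultimately show "norm (G1 - G2) \<le> (if k = 0 then min (\<mu> * DD) (2 * \<sigma>) else 2 * \<sigma> * DD ^ k / fact k)"
    by auto
qed

end
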